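(* Let $n\ge2$, $\alpha,\beta>0$, $a=1/\alpha$, $b=1/\beta$, and let $1\le j_1<\dots<j_r\le n-1$. For $1\le j\le n-1$ let $x_j$ be the event that box $(n-j,j)$ (on the second main diagonal) is non-empty. If $j_k\le j_{k+1}-2$ for all $k=1,\dots,r-1$, then \[\mathbb{P}_{n,\alpha,\beta}(x_{j_1},\dots,x_{j_r})=\prod_{k=1}^{r}\frac{1}{n+a+b-r+k-1}.\] Otherwise, $\mathbb{P}_{n,\alpha,\beta}(x_{j_1},\dots,x_{j_r})=0$.
   Context: A staircase tableau of size $n$ has boxes $(i,j)$ with $i,j\ge1$ and $i+j\le n+1$, rows numbered from the top and columns from the left. An $\alpha/\beta$-staircase tableau of size $n$ is a filling in which each box is empty or contains $\alpha$ or $\beta$, such that: all boxes in the same column and above an $\alpha$ are empty; all boxes in the same row and to the left of a $\beta$ are empty; every main-diagonal box (with $i+j=n+1$) contains a symbol. $\overline{\mathcal{S}}_n$ is the set of these. The weight is $wt(S)=\alpha^{N_\alpha}\beta^{N_\beta}$ ($N_\alpha,N_\beta$ the numbers of $\alpha$'s, $\beta$'s), and $\mathbb{P}_{n,\alpha,\beta}(S)=wt(S)/\sum_{T\in\overline{\mathcal{S}}_n}wt(T)$. $\mathbb{P}_{n,\alpha,\beta}(E_1,\dots,E_r)$ denotes the probability of the intersection of the events. *)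

theory Defs
  imports Complex_Main
begin

datatype cell = Empty | Alpha | Beta

text \<open>Boxes of the staircase of size n: (i,j) with i,j \<ge> 1 and i+j \<le> n+1
  (row i from the top, column j from the left).\<close>
definition box :: "nat \<Rightarrow> nat \<times> nat \<Rightarrow> bool" where
  "box n p \<longleftrightarrow> 1 \<le> fst p \<and> 1 \<le> snd p \<and> fst p + snd p \<le> n + 1"

definition stair_tableaux :: "nat \<Rightarrow> (nat \<times> nat \<Rightarrow> cell) set" where
  "stair_tableaux n = {S.
     (\<forall>p. \<not> box n p \<longrightarrow> S p = Empty) \<and>
     (\<comment> \<open>boxes in the same column above an alpha are empty\<close>
      \<forall>i j i'. box n (i,j) \<and> S (i,j) = Alpha \<and> 1 \<le> i' \<and> i' < i \<longrightarrow> S (i',j) = Empty) \<and>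
     (\<comment> \<open>boxes in the same row left of a beta are empty\<close>
      \<forall>i j j'. box n (i,j) \<and> S (i,j) = Beta \<and> 1 \<le> j' \<and> j' < j \<longrightarrow> S (i,j') = Empty) \<and>
     (\<comment> \<open>main-diagonal boxes are filled\<close>
      \<forall>i j. 1 \<le> i \<and> 1 \<le> j \<and> i + j = n + 1 \<longrightarrow> S (i,j) \<noteq> Empty)}"

definition boxes :: "nat \<Rightarrow> (nat \<times> nat) set" where
  "boxes n = {p. box n p}"

definition N_alpha :: "nat \<Rightarrow> (nat \<times> nat \<Rightarrow> cell) \<Rightarrow> nat" where
  "N_alpha n S = card {p \<in> boxes n. S p = Alpha}"

definition N_beta :: "nat \<Rightarrow> (nat \<times> nat \<Rightarrow> cell) \<Rightarrow> nat" where
  "N_beta n S = card {p \<in> boxes n. S p = Beta}"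

definition wt :: "nat \<Rightarrow> real \<Rightarrow> real \<Rightarrow> (nat \<times> nat \<Rightarrow> cell) \<Rightarrow> real" where
  "wt n \<alpha> \<beta> S = \<alpha> ^ N_alpha n S * \<beta> ^ N_beta n S"

definition Prob :: "nat \<Rightarrow> real \<Rightarrow> real \<Rightarrow> ((nat \<times> nat \<Rightarrow> cell) \<Rightarrow> bool) \<Rightarrow> real" where
  "Prob n \<alpha> \<beta> E =
     (\<Sum>S\<in>{S \<in> stair_tableaux n. E S}. wt n \<alpha> \<beta> S) / (\<Sum>S\<in>stair_tableaux n. wt n \<alpha> \<beta> S)"

definition x_event :: "nat \<Rightarrow> nat \<Rightarrow> (nat \<times> nat \<Rightarrow> cell) \<Rightarrow> bool" where
  "x_event n j S \<longleftrightarrow> S (n - j, j) \<noteq> Empty"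

end

(*
  Deleting row n-j+1 and column j+1 from a tableau whose box (n-j, j) is filled leaves a tableau
  of size n-1; these two lines carry only the beta below and the alpha to the right of the box,
  so the deletion divides the weight by alpha*beta and is invertible. For indices at distance at
  least 2 the deletions can be performed one after another, so the event x_j1, ..., x_jr has
  weight (alpha*beta)^r Z(n-r), where Z is the partition function. Adjacent indices exclude each
  other: a filled box (n-j-1, j+1) forces a beta at (n-j, j+1), which empties (n-j, j).

  The partition function satisfies Z(n) = (alpha + beta + (n-1) alpha*beta) Z(n-1): the corner (1, n)
  holds a beta, or an alpha that can be followed down the main diagonal to the corner (n, 1),
  picking up alpha*beta Z(n-1) at each of the n-1 steps.
*)

theory Submission
  imports Defs "HOL-Combinatorics.Transposition"
begin

type_synonym tableau = "nat \<times> nat \<Rightarrow> cell"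

context
  fixes S :: tableau and n :: nat
  assumes S: "S \<in> stair_tableaux n"
begin

lemma tableau_outside: "\<not> box n q \<Longrightarrow> S q = Empty"
  using S unfolding stair_tableaux_def by blast

lemma tableau_box: "S q \<noteq> Empty \<Longrightarrow> box n q"
  using tableau_outside by blast

lemma tableau_above_alpha:
  assumes "S (i,j) = Alpha" "1 \<le> i'" "i' < i"
  shows "S (i',j) = Empty"
proof -
  have "box n (i,j)" using assms(1) tableau_box by simp
  with S assms show ?thesis unfolding stair_tableaux_def by blast
qed

lemma tableau_left_of_beta:
  assumes "S (i,j) = Beta" "1 \<le> j'" "j' < j"
  shows "S (i,j') = Empty"
proof -
  have "box n (i,j)" using assms(1) tableau_box by simp
  with S assms show ?thesis unfolding stair_tableaux_def by blast
qed

lemma tableau_diagonal: "1 \<le> i \<Longrightarrow> 1 \<le> j \<Longrightarrow> i + j = n + 1 \<Longrightarrow> S (i,j) \<noteq> Empty"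
  using S unfolding stair_tableaux_def by blast

lemma tableau_diagonal_not_alpha_iff:
  "1 \<le> i \<Longrightarrow> 1 \<le> j \<Longrightarrow> i + j = n + 1 \<Longrightarrow> S (i,j) \<noteq> Alpha \<longleftrightarrow> S (i,j) = Beta"
  using tableau_diagonal by (cases "S (i,j)") auto

text \<open>A \<open>\<beta>\<close> to the right of, or an \<open>\<alpha>\<close> below, the filled box would empty it; both neighbours lie
  on the main diagonal and so are filled.\<close>
lemma tableau_second_diagonal:
  assumes p: "1 \<le> p" "p < n" and filled: "S (p, n-p) \<noteq> Empty"
  shows "S (p, n-p+1) = Alpha" "S (p+1, n-p) = Beta"
proof -
  have diag: "p + (n-p+1) = n + 1" "(p+1) + (n-p) = n + 1" "1 \<le> n - p" using p by auto
  have "S (p, n-p+1) \<noteq> Beta"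
    using filled tableau_left_of_beta[of p "n-p+1" "n-p"] diag(3) by auto
  then show "S (p, n-p+1) = Alpha"
    using tableau_diagonal_not_alpha_iff[of p "n-p+1"] p(1) diag(1) by linarith
  have "S (p+1, n-p) \<noteq> Alpha"
    using filled tableau_above_alpha[of "p+1" "n-p" p] p(1) by auto
  then show "S (p+1, n-p) = Beta"
    using tableau_diagonal_not_alpha_iff[of "p+1" "n-p"] diag(2,3) by linarith
qed

end

lemma finite_boxes: "finite (boxes n)"
proof -
  have "boxes n \<subseteq> {0..n+1} \<times> {0..n+1}" unfolding boxes_def box_def by auto
  then show ?thesis by (rule finite_subset) auto
qed

lemma finite_cell: "finite (UNIV :: cell set)"
proof -
  have "(UNIV :: cell set) = {Empty, Alpha, Beta}" using cell.exhaust by blast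
  then show ?thesis by (metis finite.emptyI finite_insert)
qed

lemma finite_stair_tableaux: "finite (stair_tableaux n)"
proof -
  have "finite {f. \<forall>x. (x \<in> boxes n \<longrightarrow> f x \<in> (UNIV::cell set)) \<and> (x \<notin> boxes n \<longrightarrow> f x = Empty)}"
    by (rule finite_set_of_finite_funs[OF finite_boxes finite_cell])
  then show ?thesis
    by (rule finite_subset[rotated]) (auto simp: stair_tableaux_def boxes_def)
qed

definition cell_count :: "tableau \<Rightarrow> cell \<Rightarrow> nat" where
  "cell_count S v = card {q. S q = v}"

lemma finite_level_set:
  assumes "S \<in> stair_tableaux n" "v \<noteq> Empty"
  shows "finite {q. S q = v}"
proof (rule finite_subset[OF _ finite_boxes])
  show "{q. S q = v} \<subseteq> boxes n"
    using assms tableau_box[of S n] unfolding boxes_def by auto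
qed

lemma wt_eq_cell_count:
  assumes "S \<in> stair_tableaux n"
  shows "wt n a b S = a ^ cell_count S Alpha * b ^ cell_count S Beta"
proof -
  have "{p \<in> boxes n. S p = v} = {q. S q = v}" if "v \<noteq> Empty" for v
    using that tableau_box[OF assms] unfolding boxes_def by force
  then show ?thesis unfolding wt_def N_alpha_def N_beta_def cell_count_def by simp
qed

definition weight_sum :: "nat \<Rightarrow> real \<Rightarrow> real \<Rightarrow> (tableau \<Rightarrow> bool) \<Rightarrow> real" where
  "weight_sum n a b P = (\<Sum>S\<in>{S \<in> stair_tableaux n. P S}. wt n a b S)"

definition partition_function :: "nat \<Rightarrow> real \<Rightarrow> real \<Rightarrow> real" where
  "partition_function n a b = weight_sum n a b (\<lambda>S. True)"

lemma Prob_eq_weight_sum: "Prob n a b E = weight_sum n a b E / partition_function n a b"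
  unfolding Prob_def partition_function_def weight_sum_def by simp

lemma weight_sum_split:
  "weight_sum n a b P = weight_sum n a b (\<lambda>S. P S \<and> Q S) + weight_sum n a b (\<lambda>S. P S \<and> \<not> Q S)"
proof -
  have "{S \<in> stair_tableaux n. P S} =
      {S \<in> stair_tableaux n. P S \<and> Q S} \<union> {S \<in> stair_tableaux n. P S \<and> \<not> Q S}" by blast
  then show ?thesis unfolding weight_sum_def
    by (simp only:) (rule sum.union_disjoint; use finite_stair_tableaux in auto)
qed

lemma weight_sum_cong:
  "(\<And>S. S \<in> stair_tableaux n \<Longrightarrow> P S \<longleftrightarrow> Q S) \<Longrightarrow> weight_sum n a b P = weight_sum n a b Q"
  unfolding weight_sum_def by (rule sum.cong) auto

lemma weight_sum_eq_0:
  "(\<And>S. S \<in> stair_tableaux n \<Longrightarrow> \<not> P S) \<Longrightarrow> weight_sum n a b P = 0"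
  unfolding weight_sum_def by (rule sum.neutral) auto

lemma weight_sum_reindex:
  assumes f: "\<And>S'. S' \<in> stair_tableaux m \<Longrightarrow> Q' S' \<Longrightarrow>
      f S' \<in> stair_tableaux n \<and> Q (f S') \<and> g (f S') = S' \<and> wt n a b (f S') = c * wt m a' b' S'"
    and g: "\<And>S. S \<in> stair_tableaux n \<Longrightarrow> Q S \<Longrightarrow> g S \<in> stair_tableaux m \<and> Q' (g S) \<and> f (g S) = S"
  shows "weight_sum n a b (\<lambda>S. Q S \<and> P S) = c * weight_sum m a' b' (\<lambda>S'. Q' S' \<and> P (f S'))"
proof -
  let ?A = "{S' \<in> stair_tableaux m. Q' S' \<and> P (f S')}"
  have "bij_betw f ?A {S \<in> stair_tableaux n. Q S \<and> P S}"
    by (rule bij_betw_byWitness[where f' = g]) (use f g in \<open>auto 0 3\<close>)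
  then have "weight_sum n a b (\<lambda>S. Q S \<and> P S) = (\<Sum>S'\<in>?A. wt n a b (f S'))"
    unfolding weight_sum_def by (simp add: sum.reindex_bij_betw)
  also have "\<dots> = (\<Sum>S'\<in>?A. c * wt m a' b' S')"
    using f by (intro sum.cong) auto
  finally show ?thesis
    unfolding weight_sum_def by (simp add: sum_distrib_left)
qed

fun flip_cell :: "cell \<Rightarrow> cell" where
  "flip_cell Empty = Empty"
| "flip_cell Alpha = Beta"
| "flip_cell Beta = Alpha"

lemma flip_cell_flip_cell [simp]: "flip_cell (flip_cell v) = v"
  by (cases v) auto

lemma flip_cell_eq_iff [simp]:
  "flip_cell v = Empty \<longleftrightarrow> v = Empty" "flip_cell v = Alpha \<longleftrightarrow> v = Beta" "flip_cell v = Beta \<longleftrightarrow> v = Alpha"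
  by (cases v; simp)+

definition transpose_tableau :: "tableau \<Rightarrow> tableau" where
  "transpose_tableau S = (\<lambda>(i,k). flip_cell (S (k,i)))"

lemma transpose_tableau_apply [simp]: "transpose_tableau S (i,k) = flip_cell (S (k,i))"
  by (simp add: transpose_tableau_def)

lemma transpose_transpose_tableau [simp]: "transpose_tableau (transpose_tableau S) = S"
  by (auto simp: transpose_tableau_def)

lemma transpose_tableau_in_stair_tableaux:
  assumes "S \<in> stair_tableaux n"
  shows "transpose_tableau S \<in> stair_tableaux n"
  unfolding stair_tableaux_def mem_Collect_eq
proof (intro conjI allI impI)
  fix q :: "nat \<times> nat"
  assume "\<not> box n q"
  then have "\<not> box n (prod.swap q)" by (auto simp: box_def)
  then show "transpose_tableau S q = Empty"
    using tableau_outside[OF assms] by (cases q) auto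
next
  fix i j i' assume "box n (i,j) \<and> transpose_tableau S (i,j) = Alpha \<and> 1 \<le> i' \<and> i' < i"
  then show "transpose_tableau S (i',j) = Empty"
    using tableau_left_of_beta[OF assms] by auto
next
  fix i j j' assume "box n (i,j) \<and> transpose_tableau S (i,j) = Beta \<and> 1 \<le> j' \<and> j' < j"
  then show "transpose_tableau S (i,j') = Empty"
    using tableau_above_alpha[OF assms] by auto
next
  fix i j assume "1 \<le> i \<and> 1 \<le> j \<and> i + j = n + 1"
  then show "transpose_tableau S (i,j) \<noteq> Empty"
    using tableau_diagonal[OF assms, of j i] by auto
qed

definition empty_above_alpha :: "nat \<Rightarrow> tableau \<Rightarrow> bool" where
  "empty_above_alpha n S \<longleftrightarrow>
     (\<forall>i j i'. box n (i,j) \<and> S (i,j) = Alpha \<and> 1 \<le> i' \<and> i' < i \<longrightarrow> S (i',j) = Empty)"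

lemma empty_above_alphaI:
  "(\<And>i j i'. box n (i,j) \<Longrightarrow> S (i,j) = Alpha \<Longrightarrow> 1 \<le> i' \<Longrightarrow> i' < i \<Longrightarrow> S (i',j) = Empty)
   \<Longrightarrow> empty_above_alpha n S"
  unfolding empty_above_alpha_def by blast

text \<open>The row condition on \<open>\<beta>\<close>'s is the column condition on \<open>\<alpha>\<close>'s of the transpose.\<close>
lemma stair_tableauxI:
  assumes "\<And>q. \<not> box n q \<Longrightarrow> S q = Empty"
    and "empty_above_alpha n S" and "empty_above_alpha n (transpose_tableau S)"
    and "\<And>i j. 1 \<le> i \<Longrightarrow> 1 \<le> j \<Longrightarrow> i + j = n + 1 \<Longrightarrow> S (i,j) \<noteq> Empty"
  shows "S \<in> stair_tableaux n"
proof -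
  have beta: "S (i,j') = Empty" if "box n (i,j)" "S (i,j) = Beta" "1 \<le> j'" "j' < j" for i j j'
  proof -
    have "box n (j,i)" using that(1) by (simp add: box_def add.commute)
    with assms(3) that(2-4) have "transpose_tableau S (j',i) = Empty"
      unfolding empty_above_alpha_def by simp
    then show ?thesis by simp
  qed
  show ?thesis
    unfolding stair_tableaux_def mem_Collect_eq
    using assms(1,2,4) beta unfolding empty_above_alpha_def by (intro conjI) blast+
qed

lemma cell_count_transpose_tableau:
  "cell_count (transpose_tableau S) v = cell_count S (flip_cell v)"
proof -
  have "{q. transpose_tableau S q = v} = prod.swap ` {q. S q = flip_cell v}"
    by (auto simp: transpose_tableau_def image_iff)
  then show ?thesis
    unfolding cell_count_def by (simp add: card_image)
qed

lemma weight_sum_transpose: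
  "weight_sum n a b P = weight_sum n b a (\<lambda>S. P (transpose_tableau S))"
proof -
  have "weight_sum n a b (\<lambda>S. True \<and> P S) = 1 * weight_sum n b a (\<lambda>S. True \<and> P (transpose_tableau S))"
    by (rule weight_sum_reindex[where g = transpose_tableau])
      (simp_all add: transpose_tableau_in_stair_tableaux wt_eq_cell_count cell_count_transpose_tableau)
  then show ?thesis by simp
qed

lemma partition_function_commute: "partition_function n a b = partition_function n b a"
  unfolding partition_function_def by (subst weight_sum_transpose) simp

section \<open>Deleting and inserting a row and a column\<close>

definition skip :: "nat \<Rightarrow> nat \<Rightarrow> nat" where
  "skip r i = (if i < r then i else Suc i)"

definition unskip :: "nat \<Rightarrow> nat \<Rightarrow> nat" where
  "unskip r i = (if i < r then i else i - 1)"

lemma skip_neq [simp]: "skip r i \<noteq> r"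
  by (simp add: skip_def)

lemma unskip_skip [simp]: "unskip r (skip r i) = i"
  by (simp add: skip_def unskip_def)

lemma skip_unskip: "i \<noteq> r \<Longrightarrow> skip r (unskip r i) = i"
  by (auto simp: skip_def unskip_def)

lemma skip_inject [simp]: "skip r i = skip r i' \<longleftrightarrow> i = i'"
  by (auto simp: skip_def)

lemma skip_less_iff [simp]: "skip r i' < skip r i \<longleftrightarrow> i' < i"
  by (auto simp: skip_def)

lemma skip_ge: "i \<le> skip r i"
  by (simp add: skip_def)

lemma unskip_less: "i' < i \<Longrightarrow> i' \<noteq> r \<Longrightarrow> i \<noteq> r \<Longrightarrow> unskip r i' < unskip r i"
  by (auto simp: unskip_def)

lemma unskip_pos: "1 \<le> r \<Longrightarrow> 1 \<le> i \<Longrightarrow> i \<noteq> r \<Longrightarrow> 1 \<le> unskip r i"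
  by (auto simp: unskip_def)

definition delete_row_col :: "nat \<Rightarrow> nat \<Rightarrow> tableau \<Rightarrow> tableau" where
  "delete_row_col r c S = (\<lambda>(i,k). S (skip r i, skip c k))"

definition insert_row_col :: "nat \<Rightarrow> nat \<Rightarrow> tableau \<Rightarrow> tableau" where
  "insert_row_col r c S = (\<lambda>(i,k). if i = r \<or> k = c then Empty else S (unskip r i, unskip c k))"

lemma delete_row_col_apply [simp]: "delete_row_col r c S (i,k) = S (skip r i, skip c k)"
  by (simp add: delete_row_col_def)

lemma insert_row_col_apply:
  "insert_row_col r c S (i,k) = (if i = r \<or> k = c then Empty else S (unskip r i, unskip c k))"
  by (simp add: insert_row_col_def)

lemma insert_row_col_skip [simp]: "insert_row_col r c S (skip r i, skip c k) = S (i,k)"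
  by (simp add: insert_row_col_apply)

lemma transpose_insert_row_col:
  "transpose_tableau (insert_row_col r c S) = insert_row_col c r (transpose_tableau S)"
  by (auto simp: transpose_tableau_def insert_row_col_def)

lemma delete_insert_row_col [simp]: "delete_row_col r c (insert_row_col r c S) = S"
  by (auto simp: delete_row_col_def)

lemma delete_row_col_fun_upd [simp]:
  "fst q = r \<or> snd q = c \<Longrightarrow> delete_row_col r c (S(q := v)) = delete_row_col r c S"
  by (auto simp: delete_row_col_def prod_eq_iff)

lemma insert_delete_row_col:
  assumes "\<And>i k. i = r \<or> k = c \<Longrightarrow> S (i,k) = Empty"
  shows "insert_row_col r c (delete_row_col r c S) = S"
  using assms by (auto simp: insert_row_col_def skip_unskip)

lemma insert_row_col_level_set:
  assumes "v \<noteq> Empty"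
  shows "{q. insert_row_col r c S q = v} = map_prod (skip r) (skip c) ` {q. S q = v}"
proof (intro set_eqI iffI)
  fix q assume "q \<in> {q. insert_row_col r c S q = v}"
  with assms obtain i k where "q = (i,k)" "i \<noteq> r" "k \<noteq> c" "S (unskip r i, unskip c k) = v"
    by (cases q) (auto simp: insert_row_col_apply split: if_splits)
  then show "q \<in> map_prod (skip r) (skip c) ` {q. S q = v}"
  proof (intro image_eqI)
    show "q = map_prod (skip r) (skip c) (unskip r i, unskip c k)"
      using \<open>q = (i,k)\<close> \<open>i \<noteq> r\<close> \<open>k \<noteq> c\<close> by (simp add: skip_unskip)
  qed (use \<open>S (unskip r i, unskip c k) = v\<close> in simp)
qed auto

lemma inj_map_prod_skip: "inj (map_prod (skip r) (skip c))"
  by (rule prod.inj_map) (auto intro: injI)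

lemma cell_count_insert_row_col:
  "v \<noteq> Empty \<Longrightarrow> cell_count (insert_row_col r c S) v = cell_count S v"
  unfolding cell_count_def insert_row_col_level_set
  by (rule card_image) (rule inj_on_subset[OF inj_map_prod_skip], simp)

lemma finite_level_set_insert_row_col:
  "v \<noteq> Empty \<Longrightarrow> finite {q. S q = v} \<Longrightarrow> finite {q. insert_row_col r c S q = v}"
  by (simp add: insert_row_col_level_set)

lemma finite_level_set_fun_upd: "finite {q. S q = w} \<Longrightarrow> finite {q. (S(x := v)) q = w}"
  by (rule finite_subset[of _ "insert x {q. S q = w}"]) auto

lemma cell_count_fun_upd:
  assumes "finite {q. S q = w}" "S x = Empty" "w \<noteq> Empty"
  shows "cell_count (S(x := v)) w = cell_count S w + (if v = w then 1 else 0)"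
proof -
  have "{q. (S(x := v)) q = w} = (if v = w then insert x {q. S q = w} else {q. S q = w})"
    using assms(2,3) by auto
  then show ?thesis
    using assms unfolding cell_count_def by auto
qed

text \<open>If \<open>r + c = n + 2\<close>, the box \<open>(r-1, c-1)\<close> becomes a main-diagonal box of the smaller staircase
  without having been one of the larger.\<close>
lemma delete_row_col_in_stair_tableaux:
  assumes S: "S \<in> stair_tableaux n" and rc: "1 \<le> r" "1 \<le> c" "n + 1 \<le> r + c" "r + c \<le> n + 2"
    and corner: "r + c = n + 2 \<Longrightarrow> S (r-1, c-1) \<noteq> Empty"
  shows "delete_row_col r c S \<in> stair_tableaux (n-1)"
  unfolding stair_tableaux_def mem_Collect_eq
proof (intro conjI allI impI)
  fix q :: "nat \<times> nat"
  assume "\<not> box (n-1) q"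
  then have "\<not> box n (skip r (fst q), skip c (snd q))"
    using rc by (auto simp: box_def skip_def)
  then show "delete_row_col r c S q = Empty"
    using tableau_outside[OF S] by (cases q) auto
next
  fix i k i' assume "box (n-1) (i,k) \<and> delete_row_col r c S (i,k) = Alpha \<and> 1 \<le> i' \<and> i' < i"
  then show "delete_row_col r c S (i',k) = Empty"
    using tableau_above_alpha[OF S, of "skip r i" "skip c k" "skip r i'"] skip_ge[of i' r] by auto
next
  fix i k k' assume "box (n-1) (i,k) \<and> delete_row_col r c S (i,k) = Beta \<and> 1 \<le> k' \<and> k' < k"
  then show "delete_row_col r c S (i,k') = Empty"
    using tableau_left_of_beta[OF S, of "skip r i" "skip c k" "skip c k'"] skip_ge[of k' c] by auto
next
  fix i k assume diag: "1 \<le> i \<and> 1 \<le> k \<and> i + k = n - 1 + 1"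
  show "delete_row_col r c S (i,k) \<noteq> Empty"
  proof (cases "i < r \<and> k < c")
    case True
    then have "r + c = n + 2" "i = r - 1" "k = c - 1" using diag rc by auto
    then show ?thesis using corner True by (simp add: skip_def)
  next
    case False
    then have "skip r i + skip c k = n + 1" using diag rc by (auto simp: skip_def)
    then show ?thesis using tableau_diagonal[OF S] diag skip_ge[of i r] skip_ge[of k c] by auto
  qed
qed

lemma insert_row_col_box:
  assumes "S \<in> stair_tableaux m" "m + 2 \<le> r + c" "insert_row_col r c S q \<noteq> Empty"
  shows "box (m+1) q"
proof -
  obtain i k where q: "q = (i,k)" by force
  with assms(3) have "i \<noteq> r" "k \<noteq> c" and "S (unskip r i, unskip c k) \<noteq> Empty"
    by (auto simp: insert_row_col_apply split: if_splits)
  then have "box m (unskip r i, unskip c k)" using tableau_box[OF assms(1)] by blast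
  then show ?thesis using \<open>i \<noteq> r\<close> \<open>k \<noteq> c\<close> assms(2) unfolding q box_def unskip_def by (auto split: if_splits)
qed

text \<open>Inverse of deleting row \<open>n-j+1\<close> and column \<open>j+1\<close>: when the box \<open>(n-j, j)\<close> is filled, these
  carry only the \<open>\<beta>\<close> below it and the \<open>\<alpha>\<close> to its right (\<open>tableau_second_diagonal\<close>).\<close>
definition x_expansion :: "nat \<Rightarrow> nat \<Rightarrow> tableau \<Rightarrow> tableau" where
  "x_expansion n j S' =
     (insert_row_col (n-j+1) (j+1) S')((n-j+1, j) := Beta, (n-j, j+1) := Alpha)"

lemma transpose_x_expansion:
  "j \<le> n \<Longrightarrow> transpose_tableau (x_expansion n j S') = x_expansion n (n-j) (transpose_tableau S')"
  by (auto simp: x_expansion_def transpose_insert_row_col[symmetric] fun_eq_iff)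

context
  fixes n j :: nat and S' :: tableau
  assumes j: "1 \<le> j" "j < n" and S': "S' \<in> stair_tableaux (n-1)"
begin

lemma x_expansion_outside: "\<not> box n q \<Longrightarrow> x_expansion n j S' q = Empty"
  using j insert_row_col_box[OF S', of "n-j+1" "j+1" q] by (auto simp: x_expansion_def box_def)

lemma x_expansion_empty_above_alpha: "empty_above_alpha n (x_expansion n j S')"
proof (rule empty_above_alphaI)
  fix i k i' assume "box n (i,k)" and alpha: "x_expansion n j S' (i,k) = Alpha" and i': "1 \<le> i'" "i' < i"
  show "x_expansion n j S' (i',k) = Empty"
  proof (cases "(i,k) = (n-j, j+1)")
    case True
    then show ?thesis using i' by (auto simp: x_expansion_def insert_row_col_apply)
  next
    case False
    with alpha have ik: "i \<noteq> n-j+1" "k \<noteq> j+1" "S' (unskip (n-j+1) i, unskip (j+1) k) = Alpha"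
      by (auto simp: x_expansion_def insert_row_col_apply split: if_splits)
    txt \<open>The new \<open>\<beta>\<close> at \<open>(n-j+1, j)\<close> has no \<open>\<alpha>\<close> of the staircase below it.\<close>
    have "(i',k) \<noteq> (n-j+1, j)"
    proof
      assume "(i',k) = (n-j+1, j)"
      moreover have "box (n-1) (unskip (n-j+1) i, unskip (j+1) k)"
        using tableau_box[OF S'] ik(3) by simp
      ultimately show False using i' ik(1) j by (auto simp: box_def unskip_def)
    qed
    moreover have "S' (unskip (n-j+1) i', unskip (j+1) k) = Empty" if "i' \<noteq> n-j+1"
      using tableau_above_alpha[OF S' ik(3)] unskip_less[OF i'(2) that ik(1)] unskip_pos[OF _ i'(1) that]
      by simp
    ultimately show ?thesis using ik by (auto simp: x_expansion_def insert_row_col_apply)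
  qed
qed

lemma x_expansion_diagonal:
  assumes "1 \<le> i" "1 \<le> k" "i + k = n + 1"
  shows "x_expansion n j S' (i,k) \<noteq> Empty"
proof (cases "i = n-j+1 \<or> k = j+1")
  case True
  then show ?thesis using assms j by (auto simp: x_expansion_def)
next
  case False
  then have "1 \<le> unskip (n-j+1) i" "1 \<le> unskip (j+1) k"
    "unskip (n-j+1) i + unskip (j+1) k = n - 1 + 1"
    using assms j by (auto simp: unskip_def)
  then show ?thesis
    using False tableau_diagonal[OF S'] by (auto simp: x_expansion_def insert_row_col_apply)
qed

end

lemma x_expansion_in_stair_tableaux:
  assumes "1 \<le> j" "j < n" "S' \<in> stair_tableaux (n-1)"
  shows "x_expansion n j S' \<in> stair_tableaux n"
proof (rule stair_tableauxI)
  have "x_expansion n (n-j) (transpose_tableau S') = transpose_tableau (x_expansion n j S')"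
    using assms by (simp add: transpose_x_expansion)
  moreover have "empty_above_alpha n (x_expansion n (n-j) (transpose_tableau S'))"
    using assms by (intro x_expansion_empty_above_alpha transpose_tableau_in_stair_tableaux) auto
  ultimately show "empty_above_alpha n (transpose_tableau (x_expansion n j S'))" by simp
qed (use assms x_expansion_outside x_expansion_empty_above_alpha x_expansion_diagonal in auto)

lemma delete_x_expansion [simp]: "delete_row_col (n-j+1) (j+1) (x_expansion n j S') = S'"
  by (simp add: x_expansion_def)

lemma x_expansion_delete_row_col:
  assumes S: "S \<in> stair_tableaux n" and j: "1 \<le> j" "j < n" and filled: "S (n-j, j) \<noteq> Empty"
  shows "x_expansion n j (delete_row_col (n-j+1) (j+1) S) = S"
proof -
  have "n - (n-j) = j" using j by simp
  with tableau_second_diagonal[OF S, of "n-j"] j filled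
  have alpha: "S (n-j, j+1) = Alpha" and beta: "S (n-j+1, j) = Beta" by auto
  define T where "T = S((n-j+1, j) := Empty, (n-j, j+1) := Empty)"
  have "T (i,k) = Empty" if "i = n-j+1 \<or> k = j+1" for i k
  proof (cases "box n (i,k)")
    case True
    with that have "(i,k) = (n-j+1, j) \<or> (i,k) = (n-j, j+1) \<or> (i = n-j+1 \<and> 1 \<le> k \<and> k < j)
        \<or> (k = j+1 \<and> 1 \<le> i \<and> i < n-j)"
      using j by (auto simp: box_def)
    then show ?thesis
      using tableau_left_of_beta[OF S beta] tableau_above_alpha[OF S alpha] by (auto simp: T_def)
  next
    case False
    then show ?thesis using tableau_outside[OF S] by (simp add: T_def)
  qed
  then have "insert_row_col (n-j+1) (j+1) (delete_row_col (n-j+1) (j+1) T) = T"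
    by (rule insert_delete_row_col)
  moreover have "delete_row_col (n-j+1) (j+1) T = delete_row_col (n-j+1) (j+1) S"
    by (simp add: T_def)
  ultimately show ?thesis
    using alpha beta by (auto simp: x_expansion_def T_def fun_eq_iff)
qed

lemma wt_x_expansion:
  assumes j: "1 \<le> j" "j < n" and S': "S' \<in> stair_tableaux (n-1)"
  shows "wt n a b (x_expansion n j S') = a * b * wt (n-1) a b S'"
proof -
  let ?U = "insert_row_col (n-j+1) (j+1) S'"
  let ?V = "?U((n-j+1, j) := Beta)"
  have U: "?U (n-j+1, j) = Empty" "?U (n-j, j+1) = Empty" by (simp_all add: insert_row_col_apply)
  with j have V: "?V (n-j, j+1) = Empty" by simp
  have finU: "finite {q. ?U q = v}" if "v \<noteq> Empty" for v
    using that finite_level_set[OF S' that] by (rule finite_level_set_insert_row_col)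
  have finV: "finite {q. ?V q = v}" if "v \<noteq> Empty" for v
    using finU[OF that] by (rule finite_level_set_fun_upd)
  have "cell_count (?V((n-j, j+1) := Alpha)) v = cell_count ?V v + (if Alpha = v then 1 else 0)"
    and "cell_count ?V v = cell_count ?U v + (if Beta = v then 1 else 0)"
    if "v \<noteq> Empty" for v
    using finV[OF that] finU[OF that] V U(1) that by (simp_all add: cell_count_fun_upd)
  then have "cell_count (x_expansion n j S') Alpha = cell_count S' Alpha + 1"
    and "cell_count (x_expansion n j S') Beta = cell_count S' Beta + 1"
    by (simp_all add: x_expansion_def cell_count_insert_row_col)
  then show ?thesis
    using x_expansion_in_stair_tableaux[OF j S'] S' by (simp add: wt_eq_cell_count)
qed

lemma weight_sum_x_event:
  assumes j: "1 \<le> j" "j < n"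
  shows "weight_sum n a b (\<lambda>S. S (n-j, j) \<noteq> Empty \<and> P S)
    = a * b * weight_sum (n-1) a b (\<lambda>S'. P (x_expansion n j S'))"
proof -
  have "weight_sum n a b (\<lambda>S. S (n-j, j) \<noteq> Empty \<and> P S)
    = a * b * weight_sum (n-1) a b (\<lambda>S'. True \<and> P (x_expansion n j S'))"
  proof (rule weight_sum_reindex[where g = "delete_row_col (n-j+1) (j+1)"])
    fix S' assume S': "S' \<in> stair_tableaux (n-1)"
    have "S' (n-j, j) \<noteq> Empty" using tableau_diagonal[OF S', of "n-j" j] j by simp
    then have "x_expansion n j S' (n-j, j) \<noteq> Empty"
      using j by (simp add: x_expansion_def insert_row_col_apply unskip_def)
    then show "x_expansion n j S' \<in> stair_tableaux n \<and> x_expansion n j S' (n-j, j) \<noteq> Empty \<and>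
        delete_row_col (n-j+1) (j+1) (x_expansion n j S') = S' \<and>
        wt n a b (x_expansion n j S') = a * b * wt (n-1) a b S'"
      using x_expansion_in_stair_tableaux[OF j S'] wt_x_expansion[OF j S'] delete_x_expansion[of n j S']
      by simp
  next
    fix S assume "S \<in> stair_tableaux n" "S (n-j, j) \<noteq> Empty"
    then show "delete_row_col (n-j+1) (j+1) S \<in> stair_tableaux (n-1) \<and> True \<and>
        x_expansion n j (delete_row_col (n-j+1) (j+1) S) = S"
      using j delete_row_col_in_stair_tableaux[of S n "n-j+1" "j+1"] x_expansion_delete_row_col[of S n j]
      by simp
  qed
  then show ?thesis by simp
qed

definition corner_expansion :: "nat \<Rightarrow> tableau \<Rightarrow> tableau" where
  "corner_expansion n S' = (insert_row_col n 1 S')((n, 1) := Alpha)"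

context
  fixes n :: nat and S' :: tableau
  assumes n: "1 \<le> n" and S': "S' \<in> stair_tableaux (n-1)"
begin

lemma corner_expansion_empty_above_alpha: "empty_above_alpha n (corner_expansion n S')"
proof (rule empty_above_alphaI)
  fix i k i' assume alpha: "corner_expansion n S' (i,k) = Alpha" and i': "1 \<le> i'" "i' < i"
  show "corner_expansion n S' (i',k) = Empty"
  proof (cases "(i,k) = (n, 1)")
    case True
    then show ?thesis using i' by (auto simp: corner_expansion_def insert_row_col_apply)
  next
    case False
    with alpha have ik: "i \<noteq> n" "k \<noteq> 1" "S' (unskip n i, unskip 1 k) = Alpha"
      by (auto simp: corner_expansion_def insert_row_col_apply split: if_splits)
    have "S' (unskip n i', unskip 1 k) = Empty" if "i' \<noteq> n"
      using tableau_above_alpha[OF S' ik(3)] unskip_less[OF i'(2) that ik(1)] unskip_pos[OF n i'(1) that]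
      by simp
    then show ?thesis using ik by (auto simp: corner_expansion_def insert_row_col_apply)
  qed
qed

lemma corner_expansion_left_of_beta:
  assumes "corner_expansion n S' (i,k) = Beta" "1 \<le> k'" "k' < k"
  shows "corner_expansion n S' (i,k') = Empty"
proof -
  from assms(1) have ik: "i \<noteq> n" "k \<noteq> 1" "S' (unskip n i, unskip 1 k) = Beta"
    by (auto simp: corner_expansion_def insert_row_col_apply split: if_splits)
  have "S' (unskip n i, unskip 1 k') = Empty" if "k' \<noteq> 1"
    using tableau_left_of_beta[OF S' ik(3)] unskip_less[OF assms(3) that ik(2)] unskip_pos[OF _ assms(2) that]
    by simp
  then show ?thesis using ik by (auto simp: corner_expansion_def insert_row_col_apply)
qed

lemma corner_expansion_diagonal:
  assumes "1 \<le> i" "1 \<le> k" "i + k = n + 1"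
  shows "corner_expansion n S' (i,k) \<noteq> Empty"
proof (cases "i = n \<or> k = 1")
  case True
  then show ?thesis using assms by (auto simp: corner_expansion_def)
next
  case False
  then have "1 \<le> unskip n i" "1 \<le> unskip 1 k" "unskip n i + unskip 1 k = n - 1 + 1"
    using assms by (auto simp: unskip_def)
  then show ?thesis
    using False tableau_diagonal[OF S'] by (auto simp: corner_expansion_def insert_row_col_apply)
qed

lemma corner_expansion_in_stair_tableaux: "corner_expansion n S' \<in> stair_tableaux n"
proof (rule stair_tableauxI)
  show "empty_above_alpha n (transpose_tableau (corner_expansion n S'))"
    by (rule empty_above_alphaI) (auto intro: corner_expansion_left_of_beta)
qed (use n insert_row_col_box[OF S', of n 1] corner_expansion_empty_above_alpha corner_expansion_diagonal
    in \<open>auto simp: corner_expansion_def box_def\<close>)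

end

lemma corner_expansion_delete_row_col:
  assumes S: "S \<in> stair_tableaux n" and alpha: "S (n, 1) = Alpha"
  shows "corner_expansion n (delete_row_col n 1 S) = S"
proof -
  define T where "T = S((n, 1) := Empty)"
  have "T (i,k) = Empty" if "i = n \<or> k = 1" for i k
  proof (cases "1 \<le> i \<and> i < n")
    case True
    with that show ?thesis using tableau_above_alpha[OF S alpha] by (auto simp: T_def)
  next
    case False
    with that have "(i,k) = (n, 1) \<or> \<not> box n (i,k)" by (auto simp: box_def)
    then show ?thesis using tableau_outside[OF S] by (auto simp: T_def)
  qed
  then have "insert_row_col n 1 (delete_row_col n 1 T) = T"
    by (rule insert_delete_row_col)
  then show ?thesis
    using alpha by (auto simp: corner_expansion_def T_def fun_eq_iff)
qed

lemma wt_corner_expansion: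
  assumes n: "1 \<le> n" and S': "S' \<in> stair_tableaux (n-1)"
  shows "wt n a b (corner_expansion n S') = a * wt (n-1) a b S'"
proof -
  let ?U = "insert_row_col n 1 S'"
  have "cell_count (?U((n, 1) := Alpha)) v = cell_count ?U v + (if Alpha = v then 1 else 0)"
    if "v \<noteq> Empty" for v
    using finite_level_set_insert_row_col[OF that finite_level_set[OF S' that]] that
    by (simp add: cell_count_fun_upd insert_row_col_apply)
  then have "cell_count (corner_expansion n S') Alpha = cell_count S' Alpha + 1"
    and "cell_count (corner_expansion n S') Beta = cell_count S' Beta"
    by (simp_all add: corner_expansion_def cell_count_insert_row_col)
  then show ?thesis
    using corner_expansion_in_stair_tableaux[OF n S'] S' by (simp add: wt_eq_cell_count)
qed

lemma weight_sum_corner_alpha: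
  assumes n: "1 \<le> n"
  shows "weight_sum n a b (\<lambda>S. S (n, 1) = Alpha) = a * partition_function (n-1) a b"
proof -
  have "weight_sum n a b (\<lambda>S. S (n, 1) = Alpha \<and> True)
    = a * weight_sum (n-1) a b (\<lambda>S'. True \<and> True)"
  proof (rule weight_sum_reindex[where g = "delete_row_col n 1"])
    fix S' assume S': "S' \<in> stair_tableaux (n-1)"
    show "corner_expansion n S' \<in> stair_tableaux n \<and> corner_expansion n S' (n, 1) = Alpha \<and>
        delete_row_col n 1 (corner_expansion n S') = S' \<and>
        wt n a b (corner_expansion n S') = a * wt (n-1) a b S'"
      using corner_expansion_in_stair_tableaux[OF n S'] wt_corner_expansion[OF n S']
      by (simp add: corner_expansion_def)
  next
    fix S assume "S \<in> stair_tableaux n" "S (n, 1) = Alpha"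
    then show "delete_row_col n 1 S \<in> stair_tableaux (n-1) \<and> True \<and>
        corner_expansion n (delete_row_col n 1 S) = S"
      using n delete_row_col_in_stair_tableaux[of S n n 1] corner_expansion_delete_row_col[of S n]
      by simp
  qed
  then show ?thesis by (simp add: partition_function_def)
qed

lemma weight_sum_corner_beta:
  assumes "1 \<le> n"
  shows "weight_sum n a b (\<lambda>S. S (1, n) = Beta) = b * partition_function (n-1) a b"
  using weight_sum_corner_alpha[OF assms, of b a]
  by (simp add: weight_sum_transpose[of n a b] partition_function_commute)

section \<open>Exchanging an \<open>\<alpha>\<close>-\<open>\<beta>\<close> pair on the main diagonal\<close>

text \<open>The main-diagonal boxes \<open>(p, n-p+1)\<close> and \<open>(p+1, n-p)\<close> trade places.\<close>
definition swap_adjacent :: "nat \<Rightarrow> nat \<Rightarrow> tableau \<Rightarrow> tableau" where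
  "swap_adjacent n p S = (\<lambda>(i,k). S (transpose p (Suc p) i, transpose (n-p) (Suc (n-p)) k))"

definition alpha_beta_pair :: "nat \<Rightarrow> nat \<Rightarrow> tableau \<Rightarrow> bool" where
  "alpha_beta_pair n p S \<longleftrightarrow> S (p, n-p+1) = Alpha \<and> S (p+1, n-p) = Beta \<and> S (p, n-p) = Empty"

definition beta_alpha_pair :: "nat \<Rightarrow> nat \<Rightarrow> tableau \<Rightarrow> bool" where
  "beta_alpha_pair n p S \<longleftrightarrow> S (p, n-p+1) = Beta \<and> S (p+1, n-p) = Alpha"

lemma swap_adjacent_apply [simp]:
  "swap_adjacent n p S (i,k) = S (transpose p (Suc p) i, transpose (n-p) (Suc (n-p)) k)"
  by (simp add: swap_adjacent_def)

lemma swap_adjacent_swap_adjacent [simp]: "swap_adjacent n p (swap_adjacent n p S) = S"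
  by (simp add: swap_adjacent_def)

lemma transpose_swap_adjacent:
  "p \<le> n \<Longrightarrow> transpose_tableau (swap_adjacent n p S) = swap_adjacent n (n-p) (transpose_tableau S)"
  by (simp add: fun_eq_iff)

lemma alpha_beta_pair_transpose:
  "p \<le> n \<Longrightarrow> alpha_beta_pair n (n-p) (transpose_tableau S) \<longleftrightarrow> alpha_beta_pair n p S"
  by (auto simp: alpha_beta_pair_def)

lemma beta_alpha_pair_transpose:
  "p \<le> n \<Longrightarrow> beta_alpha_pair n (n-p) (transpose_tableau S) \<longleftrightarrow> beta_alpha_pair n p S"
  by (auto simp: beta_alpha_pair_def)

lemma transpose_Suc_less:
  "i' < i \<Longrightarrow> \<not> (i' = p \<and> i = Suc p) \<Longrightarrow> transpose p (Suc p) i' < transpose p (Suc p) i"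
  by (auto simp: transpose_def)

lemma transpose_Suc_pos: "1 \<le> p \<Longrightarrow> 1 \<le> i \<Longrightarrow> 1 \<le> transpose p (Suc p) i"
  by (simp add: transpose_def)

context
  fixes n p :: nat and S :: tableau
  assumes S: "S \<in> stair_tableaux n" and p: "1 \<le> p" "p < n"
    and pair: "alpha_beta_pair n p S \<or> beta_alpha_pair n p S"
begin

lemma swap_adjacent_outside:
  assumes "\<not> box n (i,k)"
  shows "swap_adjacent n p S (i,k) = Empty"
proof (cases "(i,k) = (p+1, n-p+1)")
  case True
  have "S (p, n-p) = Empty"
    using pair tableau_above_alpha[OF S, of "p+1" "n-p" p] p
    by (auto simp: alpha_beta_pair_def beta_alpha_pair_def)
  with True show ?thesis by simp
next
  case False
  with assms p have "\<not> box n (transpose p (Suc p) i, transpose (n-p) (Suc (n-p)) k)"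
    by (auto simp: box_def transpose_def)
  then show ?thesis using tableau_outside[OF S] by simp
qed

lemma swap_adjacent_diagonal:
  assumes "1 \<le> i" "1 \<le> k" "i + k = n + 1"
  shows "swap_adjacent n p S (i,k) \<noteq> Empty"
proof -
  have "1 \<le> transpose p (Suc p) i" "1 \<le> transpose (n-p) (Suc (n-p)) k"
    "transpose p (Suc p) i + transpose (n-p) (Suc (n-p)) k = n + 1"
    using assms p by (auto simp: transpose_def)
  then show ?thesis using tableau_diagonal[OF S] by simp
qed

text \<open>This is the one new vertical constraint created by exchanging rows \<open>p\<close> and \<open>p+1\<close>.\<close>
lemma pair_alpha_above_empty:
  assumes alpha: "S (p, k) = Alpha"
  shows "S (Suc p, k) = Empty"
proof -
  have "box n (p, k)" using alpha tableau_box[OF S] by simp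
  then have k: "1 \<le> k" "k \<le> n-p+1" by (auto simp: box_def)
  from pair show ?thesis
  proof
    assume "alpha_beta_pair n p S"
    then have beta: "S (p+1, n-p) = Beta" and empty: "S (p, n-p) = Empty"
      by (auto simp: alpha_beta_pair_def)
    consider "k < n-p" | "k = n-p" | "n-p < k" by linarith
    then show ?thesis
    proof cases
      case 1
      then show ?thesis using tableau_left_of_beta[OF S beta] k by simp
    next
      case 2
      then show ?thesis using alpha empty by simp
    next
      case 3
      then show ?thesis using tableau_outside[OF S] by (simp add: box_def)
    qed
  next
    assume "beta_alpha_pair n p S"
    then have beta: "S (p, n-p+1) = Beta" by (simp add: beta_alpha_pair_def)
    with alpha k have "k < n-p+1" by (cases "k = n-p+1") auto
    then have False using alpha tableau_left_of_beta[OF S beta] k by simp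
    then show ?thesis ..
  qed
qed

lemma swap_adjacent_empty_above_alpha: "empty_above_alpha n (swap_adjacent n p S)"
proof (rule empty_above_alphaI)
  fix i k i' assume alpha: "swap_adjacent n p S (i,k) = Alpha" and i': "1 \<le> i'" "i' < i"
  show "swap_adjacent n p S (i',k) = Empty"
  proof (cases "i' = p \<and> i = Suc p")
    case True
    then show ?thesis using alpha pair_alpha_above_empty by simp
  next
    case False
    then show ?thesis
      using alpha tableau_above_alpha[OF S] transpose_Suc_less[OF i'(2) False]
        transpose_Suc_pos[OF p(1) i'(1)]
      by simp
  qed
qed

end

lemma swap_adjacent_in_stair_tableaux:
  assumes S: "S \<in> stair_tableaux n" and p: "1 \<le> p" "p < n"
    and pair: "alpha_beta_pair n p S \<or> beta_alpha_pair n p S"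
  shows "swap_adjacent n p S \<in> stair_tableaux n"
proof (rule stair_tableauxI)
  have "empty_above_alpha n (swap_adjacent n (n-p) (transpose_tableau S))"
    using assms
    by (intro swap_adjacent_empty_above_alpha transpose_tableau_in_stair_tableaux)
      (auto simp: alpha_beta_pair_transpose beta_alpha_pair_transpose)
  then show "empty_above_alpha n (transpose_tableau (swap_adjacent n p S))"
    using p by (simp add: transpose_swap_adjacent)
qed (use assms swap_adjacent_outside swap_adjacent_empty_above_alpha swap_adjacent_diagonal in auto)

lemma cell_count_swap_adjacent: "cell_count (swap_adjacent n p S) v = cell_count S v"
proof -
  have "{q. swap_adjacent n p S q = v} =
      map_prod (transpose p (Suc p)) (transpose (n-p) (Suc (n-p))) ` {q. S q = v}"
    by (force simp: image_iff)
  then show ?thesis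
    unfolding cell_count_def
    by (simp add: card_image inj_on_subset[OF prod.inj_map[OF inj_transpose inj_transpose]])
qed

lemma weight_sum_alpha_beta_pair:
  assumes p: "1 \<le> p" "p < n"
  shows "weight_sum n a b (alpha_beta_pair n p) = weight_sum n a b (beta_alpha_pair n p)"
proof -
  have "weight_sum n a b (\<lambda>S. alpha_beta_pair n p S \<and> True)
    = 1 * weight_sum n a b (\<lambda>S. beta_alpha_pair n p S \<and> True)"
  proof (rule weight_sum_reindex[where f = "swap_adjacent n p" and g = "swap_adjacent n p"])
    fix S assume S: "S \<in> stair_tableaux n" "beta_alpha_pair n p S"
    have "\<not> box n (p+1, n-p+1)" by (simp add: box_def)
    then have "alpha_beta_pair n p (swap_adjacent n p S)"
      using S p tableau_outside[OF S(1)] by (auto simp: alpha_beta_pair_def beta_alpha_pair_def)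
    then show "swap_adjacent n p S \<in> stair_tableaux n \<and> alpha_beta_pair n p (swap_adjacent n p S) \<and>
        swap_adjacent n p (swap_adjacent n p S) = S \<and>
        wt n a b (swap_adjacent n p S) = 1 * wt n a b S"
      using swap_adjacent_in_stair_tableaux[OF S(1) p] S
      by (simp add: wt_eq_cell_count cell_count_swap_adjacent)
  next
    fix S assume "S \<in> stair_tableaux n" "alpha_beta_pair n p S"
    then show "swap_adjacent n p S \<in> stair_tableaux n \<and> beta_alpha_pair n p (swap_adjacent n p S) \<and>
        swap_adjacent n p (swap_adjacent n p S) = S"
      using swap_adjacent_in_stair_tableaux[OF _ p] p
      by (auto simp: alpha_beta_pair_def beta_alpha_pair_def)
  qed
  then show ?thesis by simp
qed

section \<open>The partition function\<close>

text \<open>Following an \<open>\<alpha>\<close> on the main diagonal one step down: either the next diagonal box also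
  holds an \<open>\<alpha>\<close>, or the box between them is filled, or the two boxes form an exchangeable
  \<open>\<alpha>\<close>-\<open>\<beta>\<close> pair.\<close>
lemma weight_sum_diagonal_alpha_step:
  assumes p: "1 \<le> p" "p < n"
  shows "weight_sum n a b (\<lambda>S. S (p, n-p+1) = Alpha)
    = weight_sum n a b (\<lambda>S. S (p+1, n-p) = Alpha) + a * b * partition_function (n-1) a b"
proof -
  let ?P = "\<lambda>S. S (p, n-p+1) = Alpha" and ?Q = "\<lambda>S. S (p+1, n-p) = Alpha"
  let ?X = "\<lambda>S. S (p, n-p) \<noteq> Empty"
  have j: "1 \<le> n-p" "n-p < n" and np: "n - (n-p) = p" using p by auto
  have "weight_sum n a b ?P = weight_sum n a b (\<lambda>S. ?P S \<and> ?Q S)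
      + weight_sum n a b (\<lambda>S. (?P S \<and> \<not> ?Q S) \<and> ?X S) + weight_sum n a b (\<lambda>S. (?P S \<and> \<not> ?Q S) \<and> \<not> ?X S)"
    using weight_sum_split[of n a b ?P ?Q] weight_sum_split[of n a b "\<lambda>S. ?P S \<and> \<not> ?Q S" ?X] by simp
  also have "weight_sum n a b (\<lambda>S. (?P S \<and> \<not> ?Q S) \<and> ?X S) = weight_sum n a b (\<lambda>S. ?X S \<and> True)"
  proof (rule weight_sum_cong)
    fix S assume "S \<in> stair_tableaux n"
    from tableau_second_diagonal[OF this p] show "((?P S \<and> \<not> ?Q S) \<and> ?X S) \<longleftrightarrow> ?X S \<and> True"
      by auto
  qed
  also have "\<dots> = a * b * partition_function (n-1) a b"
    using weight_sum_x_event[OF j, of a b "\<lambda>_. True"] by (simp add: np partition_function_def)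
  also have "weight_sum n a b (\<lambda>S. (?P S \<and> \<not> ?Q S) \<and> \<not> ?X S) = weight_sum n a b (alpha_beta_pair n p)"
    using tableau_diagonal_not_alpha_iff[of _ n "p+1" "n-p"] p
    by (intro weight_sum_cong) (auto simp: alpha_beta_pair_def)
  also have "\<dots> = weight_sum n a b (beta_alpha_pair n p)"
    by (rule weight_sum_alpha_beta_pair[OF p])
  also have "\<dots> = weight_sum n a b (\<lambda>S. ?Q S \<and> \<not> ?P S)"
    using tableau_diagonal_not_alpha_iff[of _ n p "n-p+1"] p
    by (intro weight_sum_cong) (auto simp: beta_alpha_pair_def)
  also have "weight_sum n a b (\<lambda>S. ?P S \<and> ?Q S) = weight_sum n a b (\<lambda>S. ?Q S \<and> ?P S)"
    by (rule weight_sum_cong) auto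
  finally show ?thesis
    using weight_sum_split[of n a b ?Q ?P] by simp
qed

lemma weight_sum_diagonal_alpha:
  assumes "1 \<le> p" "p \<le> n"
  shows "weight_sum n a b (\<lambda>S. S (p, n-p+1) = Alpha)
    = weight_sum n a b (\<lambda>S. S (n, 1) = Alpha) + real (n-p) * (a * b * partition_function (n-1) a b)"
  using assms(2,1)
proof (induction p rule: inc_induct)
  case (step p)
  then show ?case
    using weight_sum_diagonal_alpha_step[of p n a b] by (simp add: Suc_diff_Suc algebra_simps)
qed simp

lemma partition_function_rec:
  assumes "1 \<le> n"
  shows "partition_function n a b = (a + b + real (n-1) * a * b) * partition_function (n-1) a b"
proof -
  have "partition_function n a b =
      weight_sum n a b (\<lambda>S. S (1, n) = Alpha) + weight_sum n a b (\<lambda>S. S (1, n) = Beta)"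
    unfolding partition_function_def
    using weight_sum_split[of n a b "\<lambda>_. True" "\<lambda>S. S (1, n) = Alpha"] assms
      weight_sum_cong[of n "\<lambda>S. \<not> S (1, n) = Alpha" "\<lambda>S. S (1, n) = Beta"]
      tableau_diagonal_not_alpha_iff[of _ n 1 n]
    by simp
  then show ?thesis
    using assms weight_sum_diagonal_alpha[of 1 n a b] weight_sum_corner_alpha weight_sum_corner_beta
    by (simp add: algebra_simps)
qed

lemma stair_tableaux_0: "stair_tableaux 0 = {\<lambda>_. Empty}"
proof -
  have "S = (\<lambda>_. Empty)" if "S \<in> stair_tableaux 0" for S
    using tableau_outside[OF that] by (auto simp: box_def)
  moreover have "(\<lambda>_. Empty) \<in> stair_tableaux 0" by (simp add: stair_tableaux_def)
  ultimately show ?thesis by blast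
qed

lemma partition_function_eq_prod: "partition_function n a b = (\<Prod>i<n. a + b + real i * a * b)"
proof (induction n)
  case 0
  show ?case
    by (simp add: partition_function_def weight_sum_def stair_tableaux_0 wt_def N_alpha_def N_beta_def)
next
  case (Suc n)
  then show ?case using partition_function_rec[of "Suc n" a b] by (simp add: mult.commute)
qed

lemma partition_function_pos:
  assumes "a > 0" "b > 0"
  shows "partition_function n a b > 0"
  unfolding partition_function_eq_prod using assms by (intro prod_pos) (simp add: add_pos_nonneg)

lemma partition_function_ratio:
  fixes a b :: real
  assumes a: "a > 0" and b: "b > 0" and "r \<le> n"
  shows "(a * b) ^ r * partition_function (n-r) a b / partition_function n a b
    = (\<Prod>k=1..r. 1 / (real n + 1/a + 1/b - real r + real k - 1))"
proof -
  define m where "m = n - r"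
  have n: "n = m + r" using \<open>r \<le> n\<close> by (simp add: m_def)
  have factor: "a * b / (a + b + real (m+i) * a * b) = 1 / (real n + 1/a + 1/b - real r + real (Suc i) - 1)"
    for i
  proof -
    have "real n + 1/a + 1/b - real r + real (Suc i) - 1 = (a + b + real (m+i) * a * b) / (a * b)"
      using a b by (simp add: n field_simps)
    then show ?thesis by simp
  qed
  have "partition_function (m + r') a b = partition_function m a b * (\<Prod>i<r'. a + b + real (m+i) * a * b)"
    for r'
    by (induction r') (simp_all add: partition_function_eq_prod ac_simps)
  then have "partition_function n a b = partition_function m a b * (\<Prod>i<r. a + b + real (m+i) * a * b)"
    by (simp add: n)
  then have "(a * b) ^ r * partition_function (n-r) a b / partition_function n a b
      = (\<Prod>i<r. a * b / (a + b + real (m+i) * a * b))"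
    using partition_function_pos[OF a b, of m] by (simp add: m_def prod_dividef)
  also have "\<dots> = (\<Prod>i<r. 1 / (real n + 1/a + 1/b - real r + real (Suc i) - 1))"
    by (intro prod.cong refl factor)
  also have "\<dots> = (\<Prod>k=1..r. 1 / (real n + 1/a + 1/b - real r + real k - 1))"
    by (simp only: One_nat_def prod.atLeast1_atMost_eq)
  finally show ?thesis .
qed

lemma x_expansion_second_diagonal:
  "i + 2 \<le> j \<Longrightarrow> j < n \<Longrightarrow> x_expansion n j S' (n-i, i) = S' (n-1-i, i)"
  by (auto simp: x_expansion_def insert_row_col_apply unskip_def)

lemma weight_sum_x_events:
  assumes "finite J" "\<forall>j\<in>J. 1 \<le> j \<and> j < n" "\<forall>i\<in>J. \<forall>j\<in>J. i < j \<longrightarrow> i + 2 \<le> j"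
  shows "weight_sum n a b (\<lambda>S. \<forall>j\<in>J. S (n-j, j) \<noteq> Empty)
    = (a * b) ^ card J * partition_function (n - card J) a b"
  using assms
proof (induction J arbitrary: n rule: finite_linorder_max_induct)
  case empty
  then show ?case by (simp add: partition_function_def)
next
  case (insert j J)
  then have j: "1 \<le> j" "j < n" and far: "\<forall>i\<in>J. i + 2 \<le> j" "\<forall>i\<in>J. 1 \<le> i \<and> i < n - 1"
    by fastforce+
  have card: "card (insert j J) = Suc (card J)" using insert.hyps by auto
  have "weight_sum n a b (\<lambda>S. \<forall>i\<in>insert j J. S (n-i, i) \<noteq> Empty)
      = a * b * weight_sum (n-1) a b (\<lambda>S'. \<forall>i\<in>J. x_expansion n j S' (n-i, i) \<noteq> Empty)"
    using weight_sum_x_event[OF j] by simp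
  also have "\<dots> = a * b * weight_sum (n-1) a b (\<lambda>S'. \<forall>i\<in>J. S' (n-1-i, i) \<noteq> Empty)"
    using far(1) j(2) by (simp add: x_expansion_second_diagonal cong: weight_sum_cong)
  also have "\<dots> = a * b * ((a * b) ^ card J * partition_function (n - 1 - card J) a b)"
    using insert.IH[of "n-1"] far(2) insert.prems(2) by simp
  finally show ?case by (simp add: card)
qed

lemma x_events_adjacent_exclusive:
  assumes S: "S \<in> stair_tableaux n" and j: "1 \<le> j" "j + 1 < n"
    and filled: "S (n-j, j) \<noteq> Empty"
  shows "S (n-(j+1), j+1) = Empty"
proof (rule ccontr)
  assume "S (n-(j+1), j+1) \<noteq> Empty"
  with tableau_second_diagonal[OF S, of "n-(j+1)"] j have "S (n-j, j+1) = Beta"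
    by (simp add: Suc_diff_Suc)
  then show False using tableau_left_of_beta[OF S, of "n-j" "j+1" j] j filled by simp
qed

lemma sorted_wrt_gap_set:
  "sorted_wrt (\<lambda>x y. x + 2 \<le> y) js \<Longrightarrow> x \<in> set js \<Longrightarrow> y \<in> set js \<Longrightarrow> x < (y::nat) \<Longrightarrow> x + 2 \<le> y"
  by (induction js) auto

lemma sorted_wrt_gap_iff:
  "sorted_wrt (\<lambda>x y. x + 2 \<le> y) js \<longleftrightarrow> (\<forall>k. k + 1 < length js \<longrightarrow> js ! k + 2 \<le> (js ! (k + 1) :: nat))"
  by (subst sorted_wrt_iff_nth_Suc_transp) (auto simp: transp_def)

lemma Prob_x_events_separated:
  fixes a b :: real
  assumes "a > 0" "b > 0" "finite J" "\<forall>j\<in>J. 1 \<le> j \<and> j < n"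
    and "\<forall>i\<in>J. \<forall>j\<in>J. i < j \<longrightarrow> i + 2 \<le> j"
  shows "Prob n a b (\<lambda>S. \<forall>j\<in>J. S (n-j, j) \<noteq> Empty)
    = (\<Prod>k=1..card J. 1 / (real n + 1/a + 1/b - real (card J) + real k - 1))"
proof -
  have "J \<subseteq> {1..<n}" using assms(4) by auto
  then have "card J \<le> n" using card_mono[of "{1..<n}" J] by simp
  then show ?thesis
    using weight_sum_x_events[OF assms(3-5)] partition_function_ratio[OF assms(1,2)]
    by (simp add: Prob_eq_weight_sum)
qed

lemma Prob_x_events_adjacent:
  assumes "j \<in> J" "j + 1 \<in> J" "1 \<le> j" "j + 1 < n"
  shows "Prob n a b (\<lambda>S. \<forall>j\<in>J. S (n-j, j) \<noteq> Empty) = 0"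
proof -
  have "weight_sum n a b (\<lambda>S. \<forall>j\<in>J. S (n-j, j) \<noteq> Empty) = 0"
    using assms x_events_adjacent_exclusive[of _ n j] by (intro weight_sum_eq_0) blast
  then show ?thesis by (simp add: Prob_eq_weight_sum)
qed

theorem theorem3p8:
  fixes n :: nat and \<alpha> \<beta> :: real and js :: "nat list"
  assumes "n \<ge> 2" and "\<alpha> > 0" and "\<beta> > 0"
    and "js \<noteq> []"
    and "sorted_wrt (<) js"
    and "\<forall>j\<in>set js. 1 \<le> j \<and> j \<le> n - 1"
  shows "Prob n \<alpha> \<beta> (\<lambda>S. \<forall>k<length js. x_event n (js ! k) S) =
    (if (\<forall>k. k + 1 < length js \<longrightarrow> js ! k + 2 \<le> js ! (k + 1))
     then (\<Prod>k=1..length js. 1 / (real n + 1/\<alpha> + 1/\<beta> - real (length js) + real k - 1))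
     else 0)"
proof -
  have event: "(\<lambda>S. \<forall>k<length js. x_event n (js ! k) S) = (\<lambda>S. \<forall>j\<in>set js. S (n-j, j) \<noteq> Empty)"
    by (simp add: x_event_def all_set_conv_all_nth)
  have bounds: "\<forall>j\<in>set js. 1 \<le> j \<and> j < n" using assms(1,6) by fastforce
  show ?thesis
  proof (cases "\<forall>k. k + 1 < length js \<longrightarrow> js ! k + 2 \<le> js ! (k + 1)")
    case True
    then have "\<forall>i\<in>set js. \<forall>j\<in>set js. i < j \<longrightarrow> i + 2 \<le> j"
      using sorted_wrt_gap_set sorted_wrt_gap_iff by blast
    moreover have "card (set js) = length js"
      using assms(5) by (simp add: distinct_card strict_sorted_iff)
    ultimately show ?thesis
      using True Prob_x_events_separated[OF assms(2,3) _ bounds] by (simp add: event)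
  next
    case False
    then obtain k where k: "k + 1 < length js" "js ! (k+1) < js ! k + 2" by auto
    moreover have "js ! k < js ! (k+1)" using sorted_wrt_nth_less[OF assms(5) _ k(1)] by simp
    ultimately have "js ! (k+1) = js ! k + 1" by simp
    moreover have "js ! k \<in> set js" "js ! (k+1) \<in> set js" using k(1) by simp_all
    ultimately have "js ! k \<in> set js" "js ! k + 1 \<in> set js" by simp_all
    then show ?thesis
      unfolding event if_not_P[OF False] using bounds by (intro Prob_x_events_adjacent) auto
  qed
qed

end
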